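(* Let $G$ be a locally compact group with a compact open subgroup $H$, and let $f:G\to\mathbb C$. Then $f\in\mathcal P(G)$ if and only if there are finitely many functions $f_i,g_i,f'_j,g'_j\in C_0(G)$ such that for all $x,y\in G$: (i) $f(xy)\chi_H(y)=\sum_{i=1}^m f_i(x)g_i(y)$, and (ii) $f(y)\chi_H(xy)=\sum_{j=1}^n f'_j(x)g'_j(y)$.
   Context: $\chi_H$ is the characteristic function of $H$; $C_0(G)$ denotes continuous complex functions vanishing at infinity. $\mathcal P(G)$ is the set of $f\in C_c(G)$ such that for some compact open subgroup $K$ of $G$ there exist finitely many $f_i\in C_c(G)$ and $\phi_i\in C(K)$ with $f(xk)=\sum_i f_i(x)\phi_i(k)$ for all $x\in G,k\in K$. *)

theory Defs
  imports "HOL-Analysis.Analysis"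
begin

text \<open>The group G is an (not necessarily abelian) additively written Hausdorff topological
  group, i.e. a type of class topological_group_add and t2_space; the group product xy is
  written x + y.\<close>

definition locally_compact_group :: "'a::{topological_group_add,t2_space} itself \<Rightarrow> bool" where
  "locally_compact_group _ \<longleftrightarrow> locally_compact_space (euclidean :: 'a topology)"

definition subgroup_of :: "'a::group_add set \<Rightarrow> bool" where
  "subgroup_of H \<longleftrightarrow> 0 \<in> H \<and> (\<forall>x\<in>H. \<forall>y\<in>H. x + y \<in> H) \<and> (\<forall>x\<in>H. - x \<in> H)"

definition compact_open_subgroup :: "'a::topological_group_add set \<Rightarrow> bool" where
  "compact_open_subgroup H \<longleftrightarrow> subgroup_of H \<and> compact H \<and> open H"

definition C0 :: "('a::topological_space \<Rightarrow> complex) \<Rightarrow> bool" where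
  "C0 f \<longleftrightarrow> continuous_on UNIV f \<and> (\<forall>e>0. compact {x. norm (f x) \<ge> e})"

definition Cc :: "('a::topological_space \<Rightarrow> complex) \<Rightarrow> bool" where
  "Cc f \<longleftrightarrow> continuous_on UNIV f \<and> compact (closure {x. f x \<noteq> 0})"

definition PG :: "('a::topological_group_add \<Rightarrow> complex) \<Rightarrow> bool" where
  "PG f \<longleftrightarrow> Cc f \<and>
     (\<exists>K. compact_open_subgroup K \<and>
       (\<exists>(N::nat) (fs :: nat \<Rightarrow> 'a \<Rightarrow> complex) (\<phi> :: nat \<Rightarrow> 'a \<Rightarrow> complex).
          (\<forall>i<N. Cc (fs i) \<and> continuous_on K (\<phi> i)) \<and>
          (\<forall>x. \<forall>k\<in>K. f (x + k) = (\<Sum>i<N. fs i x * \<phi> i k))))"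

end

theory Submission
  imports Defs
begin

(*
  Every compact set meets only finitely many left cosets of an open subgroup, and these cosets
  are clopen. Splitting y along the cosets t (H \<inter> K) that cover H, the expansion of f on K
  turns f(xy) chi_H(y) into a finite sum of products; splitting y along the cosets cH that cover
  supp f, where chi_H(xy) = chi_H(xc), does the same for f(y) chi_H(xy).

  Conversely, (ii) at x = y^-1 exhibits f as continuous. At the points (y_k^-1, y_l), with the
  y_k in distinct cosets of H on which f does not vanish, (ii) is an invertible diagonal matrix
  factoring through C^n, so f lives on finitely many cosets of H. Hence f has compact support,
  and (i) for y in H, with the f_i cut off to those cosets, is an expansion as in P(G) with K = H.
*)

lemma subgroup_ofD:
  assumes "subgroup_of H"
  shows "0 \<in> H" "x \<in> H \<Longrightarrow> y \<in> H \<Longrightarrow> x + y \<in> H" "x \<in> H \<Longrightarrow> - x \<in> H"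
  using assms by (auto simp: subgroup_of_def)

lemma compact_open_subgroupD:
  assumes "compact_open_subgroup H"
  shows "subgroup_of H" "compact H" "open H"
  using assms by (auto simp: compact_open_subgroup_def)

lemma compact_open_subgroup_Int:
  fixes H K :: "'a::{topological_group_add,t2_space} set"
  assumes "compact_open_subgroup H" "compact_open_subgroup K"
  shows "compact_open_subgroup (H \<inter> K)"
  using assms by (auto simp: compact_open_subgroup_def subgroup_of_def)

lemma mem_left_coset_iff:
  fixes a y :: "'a::group_add"
  shows "y \<in> (+) a ` L \<longleftrightarrow> - a + y \<in> L"
  by (metis add_minus_cancel image_iff minus_add_cancel)

lemma left_coset_self:
  fixes a :: "'a::group_add"
  assumes "subgroup_of L"
  shows "a \<in> (+) a ` L"
  using subgroup_ofD(1)[OF assms] by (simp add: mem_left_coset_iff)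

lemma left_coset_eq:
  fixes a y :: "'a::group_add"
  assumes "subgroup_of L" "y \<in> (+) a ` L"
  shows "(+) y ` L = (+) a ` L"
proof -
  have "- y + z \<in> L \<longleftrightarrow> - a + z \<in> L" for z
  proof -
    have l: "- a + y \<in> L" using assms(2) by (simp add: mem_left_coset_iff)
    have "- a + z = (- a + y) + (- y + z)" and "- y + z = - (- a + y) + (- a + z)"
      by (simp_all add: add.assoc[symmetric] minus_add)
    then show ?thesis using l subgroup_ofD[OF assms(1)] by metis
  qed
  then show ?thesis by (intro set_eqI) (simp only: mem_left_coset_iff)
qed

lemma left_cosets_disjoint:
  fixes a b :: "'a::group_add"
  assumes "subgroup_of L" "(+) a ` L \<noteq> (+) b ` L"
  shows "(+) a ` L \<inter> (+) b ` L = {}"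
  using assms left_coset_eq by blast

lemma left_coset_subset:
  fixes a :: "'a::group_add"
  assumes "subgroup_of H" "a \<in> H" "L \<subseteq> H"
  shows "(+) a ` L \<subseteq> H"
  using assms subgroup_ofD(2) by blast

lemma compact_left_coset:
  fixes L :: "'a::topological_group_add set"
  assumes "compact L"
  shows "compact ((+) a ` L)"
  by (rule compact_continuous_image[OF _ assms]) (intro continuous_intros)

lemma open_left_coset:
  fixes L :: "'a::topological_group_add set"
  assumes "open L"
  shows "open ((+) a ` L)"
proof -
  have "(+) a ` L = (+) (- a) -` L"
    by (auto simp: mem_left_coset_iff)
  also have "open \<dots>"
    by (rule open_vimage[OF assms]) (intro continuous_intros)
  finally show ?thesis .
qed

lemma compact_disjoint_coset_cover:
  fixes S L :: "'a::topological_group_add set"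
  assumes "subgroup_of L" "open L" "compact S"
  obtains T where "finite T" "T \<subseteq> S" "S \<subseteq> (\<Union>t\<in>T. (+) t ` L)"
    "disjoint_family_on (\<lambda>t. (+) t ` L) T"
proof -
  let ?coset = "\<lambda>t. (+) t ` L"
  have "S \<subseteq> (\<Union>t\<in>S. ?coset t)"
    using left_coset_self[OF assms(1)] by blast
  then obtain T0 where T0: "T0 \<subseteq> S" "finite T0" "S \<subseteq> (\<Union>t\<in>T0. ?coset t)"
    by (rule compactE_image[OF assms(3) open_left_coset[OF assms(2)]])
  obtain T where T: "T \<subseteq> T0" "inj_on ?coset T" "?coset ` T0 = ?coset ` T"
    using subset_image_inj[of "?coset ` T0" ?coset T0, THEN iffD1, OF subset_refl] by blast
  show thesis
  proof
    show "finite T" "T \<subseteq> S" using T(1) T0(1,2) finite_subset by blast+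
    have "(\<Union>t\<in>T0. ?coset t) = (\<Union>t\<in>T. ?coset t)" using T(3) by simp
    then show "S \<subseteq> (\<Union>t\<in>T. ?coset t)" using T0(3) by simp
    show "disjoint_family_on ?coset T"
      unfolding disjoint_family_on_def
    proof (intro ballI impI)
      fix s t assume "s \<in> T" "t \<in> T" "s \<noteq> t"
      then have "?coset s \<noteq> ?coset t" using T(2) by (auto dest: inj_onD)
      then show "?coset s \<inter> ?coset t = {}" by (rule left_cosets_disjoint[OF assms(1)])
    qed
  qed
qed

lemma sum_mult_indicator_disjoint:
  fixes g :: "'i \<Rightarrow> 'b::semiring_1"
  assumes "finite T" "disjoint_family_on A T" "t \<in> T" "y \<in> A t"
  shows "(\<Sum>s\<in>T. g s * indicator (A s) y) = g t"
proof -
  have "(\<Sum>s\<in>T. g s * indicator (A s) y) = (\<Sum>s\<in>T. if s = t then g t else 0)"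
    using assms(2-4) by (intro sum.cong) (auto simp: disjoint_family_on_def indicator_def)
  also have "\<dots> = g t" using assms(1,3) by simp
  finally show ?thesis .
qed

lemma CcI:
  fixes f :: "'a::t2_space \<Rightarrow> complex"
  assumes "continuous_on UNIV f" "compact S" "\<And>x. f x \<noteq> 0 \<Longrightarrow> x \<in> S"
  shows "Cc f"
proof -
  have "closure {x. f x \<noteq> 0} \<subseteq> S"
    using closure_minimal[of "{x. f x \<noteq> 0}" S] assms(2,3) compact_imp_closed by blast
  then have "compact (closure {x. f x \<noteq> 0})"
    using assms(2) compact_Int_closed[of S "closure {x. f x \<noteq> 0}"] by (simp add: Int_absorb1)
  with assms(1) show ?thesis by (simp add: Cc_def)
qed

lemma Cc_imp_C0:
  fixes f :: "'a::t2_space \<Rightarrow> complex"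
  assumes "Cc f"
  shows "C0 f"
  unfolding C0_def
proof (intro conjI allI impI)
  show cont: "continuous_on UNIV f" using assms by (simp add: Cc_def)
  fix e :: real assume "e > 0"
  then have "{x. e \<le> norm (f x)} = closure {x. f x \<noteq> 0} \<inter> {x. e \<le> norm (f x)}"
    using closure_subset by fastforce
  moreover have "closed {x. e \<le> norm (f x)}"
    by (rule closed_Collect_le) (auto intro!: continuous_intros cont)
  moreover have "compact (closure {x. f x \<noteq> 0})" using assms by (simp add: Cc_def)
  ultimately show "compact {x. e \<le> norm (f x)}" by (metis compact_Int_closed)
qed

lemma Cc_translate:
  fixes f :: "'a::{topological_group_add,t2_space} \<Rightarrow> complex"
  assumes "Cc f"
  shows "Cc (\<lambda>x. f (x + a))"
proof (rule CcI)
  have cont: "continuous_on UNIV f" using assms by (simp add: Cc_def)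
  show "continuous_on UNIV (\<lambda>x. f (x + a))"
    by (rule continuous_on_compose2[OF cont]) (auto intro: continuous_intros)
  show "compact ((\<lambda>z. z + - a) ` closure {x. f x \<noteq> 0})"
    using assms by (intro compact_continuous_image continuous_intros) (simp add: Cc_def)
  fix x assume "f (x + a) \<noteq> 0"
  then have "x + a \<in> closure {x. f x \<noteq> 0}" by (intro subsetD[OF closure_subset]) simp
  then show "x \<in> (\<lambda>z. z + - a) ` closure {x. f x \<noteq> 0}"
    by (rule rev_image_eqI) (simp add: add.assoc)
qed

lemma continuous_on_mult_indicator_clopen:
  fixes g :: "'a::topological_space \<Rightarrow> complex"
  assumes "continuous_on S g" "open S" "closed S"
  shows "continuous_on UNIV (\<lambda>x. g x * indicator S x)"
proof -
  have "continuous_on (S \<union> - S) (\<lambda>x. if x \<in> S then g x else 0)"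
    by (rule continuous_on_cases) (use assms in auto)
  moreover have "(\<lambda>x. g x * indicator S x) = (\<lambda>x. if x \<in> S then g x else 0)"
    by (auto simp: indicator_def)
  ultimately show ?thesis by (metis Compl_partition)
qed

lemma Cc_mult_indicator:
  fixes g :: "'a::t2_space \<Rightarrow> complex"
  assumes "continuous_on S g" "compact S" "open S"
  shows "Cc (\<lambda>x. g x * indicator S x)"
  by (rule CcI[OF continuous_on_mult_indicator_clopen[OF assms(1,3)] assms(2)])
    (use assms(2) compact_imp_closed in \<open>auto simp: indicator_def\<close>)

definition C0_tensor :: "('a::topological_space \<Rightarrow> 'b::topological_space \<Rightarrow> complex) \<Rightarrow> bool" where
  "C0_tensor k \<longleftrightarrow> (\<exists>(m::nat) fs gs. (\<forall>i<m. C0 (fs i) \<and> C0 (gs i)) \<and>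
     (\<forall>x y. k x y = (\<Sum>i<m. fs i x * gs i y)))"

lemma C0_tensor_sum:
  assumes "finite A" "\<And>a. a \<in> A \<Longrightarrow> C0 (u a)" "\<And>a. a \<in> A \<Longrightarrow> C0 (v a)"
  shows "C0_tensor (\<lambda>x y. \<Sum>a\<in>A. u a x * v a y)"
proof -
  obtain h where h: "bij_betw h {..<card A} A"
    using ex_bij_betw_nat_finite[OF assms(1)] by (auto simp: atLeast0LessThan)
  have "(\<Sum>a\<in>A. u a x * v a y) = (\<Sum>i<card A. u (h i) x * v (h i) y)" for x y
    using sum.reindex_bij_betw[OF h, of "\<lambda>a. u a x * v a y"] by simp
  moreover have "C0 (u (h i)) \<and> C0 (v (h i))" if "i < card A" for i
    using that h assms(2,3) by (auto simp: bij_betw_def)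
  ultimately show ?thesis
    unfolding C0_tensor_def by (intro exI[of _ "card A"] exI[of _ "\<lambda>i. u (h i)"] exI[of _ "\<lambda>i. v (h i)"]) auto
qed

lemma C0_tensorE:
  assumes "C0_tensor k"
  obtains m :: nat and fs gs where "\<And>i. i < m \<Longrightarrow> C0 (fs i) \<and> C0 (gs i)"
    "\<And>x y. k x y = (\<Sum>i<m. fs i x * gs i y)"
  using assms unfolding C0_tensor_def by (elim exE conjE) (rule that; auto)

lemma continuous_on_C0_tensor_antidiagonal:
  fixes k :: "'a::topological_group_add \<Rightarrow> 'a \<Rightarrow> complex"
  assumes "C0_tensor k"
  shows "continuous_on UNIV (\<lambda>y. k (- y) y)"
proof -
  obtain m :: nat and fs gs where fg: "\<And>i. i < m \<Longrightarrow> C0 (fs i) \<and> C0 (gs i)"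
    and k: "\<And>x y. k x y = (\<Sum>i<m. fs i x * gs i y)"
    using assms by (elim C0_tensorE) blast
  have "continuous_on UNIV (\<lambda>y. \<Sum>i<m. fs i (- y) * gs i y)"
  proof (intro continuous_on_sum continuous_on_mult)
    fix i assume "i \<in> {..<m}"
    then have f: "continuous_on UNIV (fs i)" and g: "continuous_on UNIV (gs i)"
      using fg by (auto simp: C0_def)
    show "continuous_on UNIV (gs i)" by (rule g)
    show "continuous_on UNIV (\<lambda>y. fs i (- y))"
      using continuous_on_compose2[OF f continuous_on_minus[OF continuous_on_id]] by simp
  qed
  then show ?thesis by (simp add: k)
qed

lemma card_le_of_diagonal_factorization:
  fixes a b :: "nat \<Rightarrow> 'i \<Rightarrow> 'b::field"
  assumes "finite S"
    and "\<And>k l. k \<in> S \<Longrightarrow> l \<in> S \<Longrightarrow> k \<noteq> l \<Longrightarrow> (\<Sum>j<n. a j k * b j l) = 0"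
    and "\<And>k. k \<in> S \<Longrightarrow> (\<Sum>j<n. a j k * b j k) \<noteq> 0"
  shows "card S \<le> n"
  using assms
proof (induction n arbitrary: a S)
  case 0
  then have "S = {}" by auto
  then show ?case by simp
next
  case (Suc n)
  show ?case
  proof (cases "\<forall>k\<in>S. a n k = 0")
    case True
    then have "card S \<le> n" by (intro Suc.IH[of S a]) (use Suc.prems in auto)
    then show ?thesis by simp
  next
    case False
    then obtain k0 where k0: "k0 \<in> S" "a n k0 \<noteq> 0" by auto
    \<comment> \<open>Subtracting multiples of row \<open>k0\<close> kills the last coordinate and keeps the matrix
      diagonal on \<open>S - {k0}\<close>.\<close>
    define a' where "a' j k = a j k - (a n k / a n k0) * a j k0" for j k
    have a': "(\<Sum>j<n. a' j k * b j l) =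
        (\<Sum>j<Suc n. a j k * b j l) - (a n k / a n k0) * (\<Sum>j<Suc n. a j k0 * b j l)" for k l
    proof -
      have "(\<Sum>j<n. a' j k * b j l) = (\<Sum>j<Suc n. a' j k * b j l)"
        using k0 by (simp add: a'_def)
      also have "\<dots> = (\<Sum>j<Suc n. a j k * b j l - (a n k / a n k0) * (a j k0 * b j l))"
        by (simp add: a'_def algebra_simps)
      also have "\<dots> = (\<Sum>j<Suc n. a j k * b j l) - (a n k / a n k0) * (\<Sum>j<Suc n. a j k0 * b j l)"
        by (simp only: sum_subtractf sum_distrib_left)
      finally show ?thesis .
    qed
    have "card (S - {k0}) \<le> n"
      by (rule Suc.IH[of "S - {k0}" a']) (use Suc.prems k0 in \<open>auto simp: a'\<close>)
    then show ?thesis using Suc.prems(1) k0(1) by simp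
  qed
qed

lemma C0_tensor_translation_kernel:
  fixes f :: "'a::{topological_group_add,t2_space} \<Rightarrow> complex"
    and F \<phi> :: "nat \<Rightarrow> 'a \<Rightarrow> complex"
  assumes H: "compact_open_subgroup H" and K: "compact_open_subgroup K"
    and F: "\<And>i. i < N \<Longrightarrow> Cc (F i)" and \<phi>: "\<And>i. i < N \<Longrightarrow> continuous_on K (\<phi> i)"
    and expansion: "\<And>x k. k \<in> K \<Longrightarrow> f (x + k) = (\<Sum>i<N. F i x * \<phi> i k)"
  shows "C0_tensor (\<lambda>x y. f (x + y) * indicator H y)"
proof -
  define L where "L = H \<inter> K"
  have L: "subgroup_of L" "compact L" "open L"
    using compact_open_subgroupD[OF compact_open_subgroup_Int[OF H K]] by (simp_all add: L_def)
  have "subgroup_of H" "compact H" using compact_open_subgroupD[OF H] by simp_all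
  obtain T where T: "finite T" "T \<subseteq> H" "H \<subseteq> (\<Union>t\<in>T. (+) t ` L)"
    and disj: "disjoint_family_on (\<lambda>t. (+) t ` L) T"
    by (rule compact_disjoint_coset_cover[OF L(1,3) \<open>compact H\<close>])
  have to_K: "- t + y \<in> K" if "y \<in> (+) t ` L" for t y
    using that by (auto simp: mem_left_coset_iff L_def)
  define u where "u a x = F (snd a) (x + fst a)" for a x
  define v where "v a y = \<phi> (snd a) (- fst a + y) * indicator ((+) (fst a) ` L) y" for a y
  have "C0_tensor (\<lambda>x y. \<Sum>a\<in>T \<times> {..<N}. u a x * v a y)"
  proof (rule C0_tensor_sum)
    fix a assume a: "a \<in> T \<times> {..<N}"
    then show "C0 (u a)" unfolding u_def by (intro Cc_imp_C0 Cc_translate F) auto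
    have "continuous_on ((+) (fst a) ` L) (\<lambda>y. \<phi> (snd a) (- fst a + y))"
      using a to_K by (intro continuous_on_compose2[OF \<phi>]) (auto intro: continuous_intros)
    then show "C0 (v a)" unfolding v_def
      by (intro Cc_imp_C0 Cc_mult_indicator compact_left_coset open_left_coset L)
  qed (simp add: T(1) finite_cartesian_product)
  moreover have "f (x + y) * indicator H y = (\<Sum>a\<in>T \<times> {..<N}. u a x * v a y)" for x y
  proof (cases "y \<in> H")
    case True
    then obtain t where t: "t \<in> T" "y \<in> (+) t ` L" using T(3) by blast
    have "(\<Sum>a\<in>T \<times> {..<N}. u a x * v a y) =
        (\<Sum>s\<in>T. (\<Sum>i<N. F i (x + s) * \<phi> i (- s + y)) * indicator ((+) s ` L) y)"
      by (simp add: sum.cartesian_product' u_def v_def sum_distrib_right mult.assoc)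
    also have "\<dots> = (\<Sum>i<N. F i (x + t) * \<phi> i (- t + y))"
      using sum_mult_indicator_disjoint[OF T(1) disj t] .
    also have "\<dots> = f ((x + t) + (- t + y))"
      using expansion to_K[OF t(2)] by simp
    finally show ?thesis using True by (simp add: add.assoc[symmetric])
  next
    case False
    have "y \<notin> (+) s ` L" if "s \<in> T" for s
    proof -
      have "(+) s ` L \<subseteq> H"
        using that T(2) by (intro left_coset_subset[OF \<open>subgroup_of H\<close>]) (auto simp: L_def)
      with False show ?thesis by blast
    qed
    then have "v a y = 0" if "a \<in> T \<times> {..<N}" for a
      using that by (auto simp: v_def)
    then show ?thesis using False by simp
  qed
  ultimately show ?thesis by simp
qed

lemma C0_tensor_coset_kernel:
  fixes f :: "'a::{topological_group_add,t2_space} \<Rightarrow> complex"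
  assumes H: "compact_open_subgroup H" and f: "Cc f"
  shows "C0_tensor (\<lambda>x y. f y * indicator H (x + y))"
proof -
  have H': "subgroup_of H" "compact H" "open H" using compact_open_subgroupD[OF H] .
  have cont: "continuous_on UNIV f" and supp: "compact (closure {y. f y \<noteq> 0})"
    using f by (simp_all add: Cc_def)
  obtain T where T: "finite T" "T \<subseteq> closure {y. f y \<noteq> 0}"
    "closure {y. f y \<noteq> 0} \<subseteq> (\<Union>t\<in>T. (+) t ` H)"
    and disj: "disjoint_family_on (\<lambda>t. (+) t ` H) T"
    by (rule compact_disjoint_coset_cover[OF H'(1,3) supp])
  define u where "u t x = (indicator H (x + t) :: complex)" for t x
  define v where "v t y = f y * indicator ((+) t ` H) y" for t y
  have "C0_tensor (\<lambda>x y. \<Sum>t\<in>T. u t x * v t y)"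
  proof (rule C0_tensor_sum[OF T(1)])
    have "Cc (indicator H :: 'a \<Rightarrow> complex)"
      using Cc_mult_indicator[of H "\<lambda>_. 1"] H'(2,3) by simp
    then show "C0 (u t)" for t unfolding u_def by (intro Cc_imp_C0 Cc_translate)
    show "C0 (v t)" for t unfolding v_def
      by (intro Cc_imp_C0 Cc_mult_indicator compact_left_coset open_left_coset H'
          continuous_on_subset[OF cont]) simp
  qed
  moreover have "f y * indicator H (x + y) = (\<Sum>t\<in>T. u t x * v t y)" for x y
  proof (cases "f y = 0")
    case False
    then have "y \<in> closure {y. f y \<noteq> 0}" by (intro subsetD[OF closure_subset]) simp
    then obtain t where t: "t \<in> T" "y \<in> (+) t ` H" using T(3) by blast
    then obtain h where h: "h \<in> H" "y = t + h" by blast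
    then have "x + y = (x + t) + h" "x + t = (x + y) + - h"
      by (simp_all only: add.assoc add.right_inverse add_0_right)
    then have "x + y \<in> H \<longleftrightarrow> x + t \<in> H"
      using subgroup_ofD(2,3)[OF H'(1)] h(1) by metis
    then have "f y * indicator H (x + y) = u t x * f y"
      by (simp add: u_def indicator_def)
    also have "\<dots> = (\<Sum>s\<in>T. u s x * f y * indicator ((+) s ` H) y)"
      using sum_mult_indicator_disjoint[OF T(1) disj t, of "\<lambda>s. u s x * f y"] by simp
    finally show ?thesis by (simp add: v_def mult.assoc)
  qed (simp add: v_def)
  ultimately show ?thesis by simp
qed

lemma finite_cosets_of_support:
  fixes f :: "'a::group_add \<Rightarrow> 'b::field" and a b :: "nat \<Rightarrow> 'a \<Rightarrow> 'b"
  assumes H: "subgroup_of H"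
    and decomposition: "\<And>x y. f y * indicator H (x + y) = (\<Sum>j<n. a j x * b j y)"
  shows "finite ((\<lambda>y. (+) y ` H) ` {y. f y \<noteq> 0})"
proof (rule ccontr)
  let ?coset = "\<lambda>y. (+) y ` H"
  assume "infinite (?coset ` {y. f y \<noteq> 0})"
  moreover obtain Y where Y: "Y \<subseteq> {y. f y \<noteq> 0}" "inj_on ?coset Y"
    "?coset ` {y. f y \<noteq> 0} = ?coset ` Y"
    using subset_image_inj[of "?coset ` {y. f y \<noteq> 0}" ?coset "{y. f y \<noteq> 0}", THEN iffD1,
        OF subset_refl]
    by blast
  ultimately have "infinite Y" by auto
  then obtain S where S: "S \<subseteq> Y" "finite S" "card S = Suc n"
    using infinite_arbitrarily_large by blast
  \<comment> \<open>At the points \<open>(- k, l)\<close>, \<open>k, l \<in> S\<close>, the kernel is an invertible diagonal matrix.\<close>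
  have "card S \<le> n"
  proof (rule card_le_of_diagonal_factorization[OF S(2), where a = "\<lambda>j k. a j (- k)" and b = b])
    fix k l assume kl: "k \<in> S" "l \<in> S" "k \<noteq> l"
    have "- k + l \<notin> H"
    proof
      assume "- k + l \<in> H"
      then have "?coset l = ?coset k" by (intro left_coset_eq[OF H]) (simp add: mem_left_coset_iff)
      then have "l = k" by (rule inj_onD[OF Y(2)]) (use kl S(1) in auto)
      with kl(3) show False by simp
    qed
    then show "(\<Sum>j<n. a j (- k) * b j l) = 0" using decomposition[where x = "- k" and y = l] by simp
  next
    fix k assume "k \<in> S"
    then show "(\<Sum>j<n. a j (- k) * b j k) \<noteq> 0"
      using decomposition[where x = "- k" and y = k] S(1) Y(1) subgroup_ofD(1)[OF H] by auto
  qed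
  with S(3) show False by simp
qed

lemma PG_if_C0_tensor_kernels:
  fixes f :: "'a::{topological_group_add,t2_space} \<Rightarrow> complex"
  assumes H: "compact_open_subgroup H"
    and translation: "C0_tensor (\<lambda>x y. f (x + y) * indicator H y)"
    and coset: "C0_tensor (\<lambda>x y. f y * indicator H (x + y))"
  shows "PG f"
proof -
  have H': "subgroup_of H" "compact H" "open H" using compact_open_subgroupD[OF H] .
  have cont: "continuous_on UNIV f"
    using continuous_on_C0_tensor_antidiagonal[OF coset] subgroup_ofD(1)[OF H'(1)] by simp
  obtain n :: nat and a b
    where coset_expansion: "\<And>x y. f y * indicator H (x + y) = (\<Sum>j<n. a j x * b j y)"
    using coset by (elim C0_tensorE) blast
  define U where "U = \<Union>((\<lambda>y. (+) y ` H) ` {y. f y \<noteq> 0})"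
  have "finite ((\<lambda>y. (+) y ` H) ` {y. f y \<noteq> 0})"
    using finite_cosets_of_support[OF H'(1) coset_expansion] .
  then have U: "compact U" "open U"
    using compact_left_coset[OF H'(2)] open_left_coset[OF H'(3)] by (auto simp: U_def)
  have near_support: "x \<in> U" if "f (x + k) \<noteq> 0" "k \<in> H" for x k
  proof -
    have "x \<in> (+) (x + k) ` H"
      unfolding mem_left_coset_iff using that(2) subgroup_ofD(3)[OF H'(1)] by (simp add: minus_add add.assoc)
    with that(1) show ?thesis by (auto simp: U_def)
  qed
  have "Cc f"
    by (rule CcI[OF cont U(1)]) (use near_support[where k = 0] subgroup_ofD(1)[OF H'(1)] in simp)
  obtain m :: nat and F \<phi> where F\<phi>: "\<And>i. i < m \<Longrightarrow> C0 (F i) \<and> C0 (\<phi> i)"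
    and translation_expansion: "\<And>x y. f (x + y) * indicator H y = (\<Sum>i<m. F i x * \<phi> i y)"
    using translation by (elim C0_tensorE) blast
  define F_U where "F_U i x = F i x * indicator U x" for i x
  have "Cc (F_U i) \<and> continuous_on H (\<phi> i)" if "i < m" for i
    using F\<phi> that U unfolding F_U_def
    by (auto simp: C0_def intro: Cc_mult_indicator continuous_on_subset)
  moreover have "f (x + k) = (\<Sum>i<m. F_U i x * \<phi> i k)" if "k \<in> H" for x k
    using translation_expansion[of x k] near_support[of x k] that
    by (cases "x \<in> U") (auto simp: F_U_def)
  ultimately show "PG f"
    unfolding PG_def using \<open>Cc f\<close> H by blast
qed

theorem proposition3p9:
  fixes f :: "'a::{topological_group_add,t2_space} \<Rightarrow> complex"
    and H :: "'a set"
  assumes "locally_compact_group TYPE('a)"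
    and "compact_open_subgroup H"
  shows "PG f \<longleftrightarrow>
    (\<exists>(m::nat) (n::nat) (fs :: nat \<Rightarrow> 'a \<Rightarrow> complex) (gs :: nat \<Rightarrow> 'a \<Rightarrow> complex)
        (fs' :: nat \<Rightarrow> 'a \<Rightarrow> complex) (gs' :: nat \<Rightarrow> 'a \<Rightarrow> complex).
       (\<forall>i<m. C0 (fs i) \<and> C0 (gs i)) \<and> (\<forall>j<n. C0 (fs' j) \<and> C0 (gs' j)) \<and>
       (\<forall>x y. f (x + y) * indicator H y = (\<Sum>i<m. fs i x * gs i y)) \<and>
       (\<forall>x y. f y * indicator H (x + y) = (\<Sum>j<n. fs' j x * gs' j y)))"
proof -
  have "PG f \<longleftrightarrow> C0_tensor (\<lambda>x y. f (x + y) * indicator H y) \<and>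
      C0_tensor (\<lambda>x y. f y * indicator H (x + y))"
  proof
    assume "PG f"
    then obtain K and N :: nat and F \<phi> where f: "Cc f" and K: "compact_open_subgroup K"
      and F\<phi>: "\<forall>i<N. Cc (F i) \<and> continuous_on K (\<phi> i)"
      and expansion: "\<forall>x. \<forall>k\<in>K. f (x + k) = (\<Sum>i<N. F i x * \<phi> i k)"
      unfolding PG_def by blast
    have "C0_tensor (\<lambda>x y. f (x + y) * indicator H y)"
      by (rule C0_tensor_translation_kernel[OF assms(2) K, where F = F and \<phi> = \<phi> and N = N])
        (use F\<phi> expansion in auto)
    with C0_tensor_coset_kernel[OF assms(2) f]
    show "C0_tensor (\<lambda>x y. f (x + y) * indicator H y) \<and>
        C0_tensor (\<lambda>x y. f y * indicator H (x + y))" by simp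
  qed (use PG_if_C0_tensor_kernels[OF assms(2)] in blast)
  then show ?thesis unfolding C0_tensor_def by blast
qed

end
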